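(* Every code $C\subseteq[5]^7$ with $|C|=14$ and minimum Hamming distance at least $6$ can be extended to such a code of size $15$: there exists $u\in[5]^7$ such that $C\cup\{u\}$ has $15$ elements and minimum Hamming distance at least $6$.
   Context: $[5]=\{0,1,2,3,4\}$. The Hamming distance between two words of $[5]^7$ is the number of coordinates in which they differ; the minimum distance of a code is the minimum Hamming distance between distinct codewords. *)

theory Defs
  imports Main
begin

text \<open>Words of [5]^7 are lists of naturals of length 7 with entries in {0..4}.\<close>
definition words :: "nat \<Rightarrow> nat \<Rightarrow> nat list set" where
  "words q n = {w. length w = n \<and> set w \<subseteq> {0..<q}}"

definition hamming :: "nat list \<Rightarrow> nat list \<Rightarrow> nat" where
  "hamming u v = card {i. i < length u \<and> u ! i \<noteq> v ! i}"

definition min_dist_ge :: "nat list set \<Rightarrow> nat \<Rightarrow> bool" where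
  "min_dist_ge C d \<longleftrightarrow> (\<forall>u\<in>C. \<forall>v\<in>C. u \<noteq> v \<longrightarrow> d \<le> hamming u v)"

end

theory Submission
  imports Defs
begin

text \<open>
  Let \<open>s\<^sub>i(v)\<close> be the number of codewords with symbol \<open>v\<close> in coordinate \<open>i\<close>.
  Distance \<open>\<ge> 6\<close> in length 7 means that two codewords agree in at most one
  coordinate, so there are at most \<open>14 \<cdot> 13 = 182\<close> triples \<open>(c, d, i)\<close> with
  \<open>c \<noteq> d\<close> and \<open>c\<^sub>i = d\<^sub>i\<close>. On the other hand column \<open>i\<close> contributes
  \<open>\<Sum>\<^sub>v s\<^sub>i(v)(s\<^sub>i(v) - 1) \<ge> 26\<close> such triples, with equality only for the
  column profile \<open>3,3,3,3,2\<close>. Hence all bounds are tight: every column has this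
  profile and every codeword agrees with the others in exactly 13 coordinates in total.
  Let \<open>u\<close> pick in each column the symbol occurring only twice. A codeword agreeing
  with \<open>u\<close> in two coordinates would meet only one other codeword there, and at most
  two elsewhere, for a total of at most \<open>2 + 5 \<cdot> 2 = 12 < 13\<close>.
\<close>

definition agreements :: "'a list \<Rightarrow> 'a list \<Rightarrow> nat" where
  "agreements u v = card {i. i < length u \<and> u ! i = v ! i}"

definition col_count :: "'a list set \<Rightarrow> nat \<Rightarrow> 'a \<Rightarrow> nat" where
  "col_count C i v = card {d \<in> C. d ! i = v}"

lemma hamming_add_agreements: "hamming u v + agreements u v = length u"
proof -
  have "{i. i < length u \<and> u ! i \<noteq> v ! i} \<union> {i. i < length u \<and> u ! i = v ! i} = {..<length u}"
    by auto
  moreover have "card ({i. i < length u \<and> u ! i \<noteq> v ! i} \<union> {i. i < length u \<and> u ! i = v ! i})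
      = hamming u v + agreements u v"
    unfolding hamming_def agreements_def by (rule card_Un_disjoint) auto
  ultimately show ?thesis by simp
qed

lemma agreements_commute: "length u = length v \<Longrightarrow> agreements u v = agreements v u"
  unfolding agreements_def by (metis eq_commute)

lemma agreements_self: "agreements u u = length u"
  by (simp add: agreements_def)

lemma nth_less_of_words: "w \<in> words q n \<Longrightarrow> i < n \<Longrightarrow> w ! i < q"
  unfolding words_def by (auto dest: nth_mem)

lemma sum_col_count:
  assumes "C \<subseteq> words q n" "finite C" "i < n"
  shows "(\<Sum>v<q. col_count C i v) = card C"
proof -
  have "(\<Sum>v<q. col_count C i v) = (\<Sum>v<q. \<Sum>d\<in>{d \<in> C. d ! i = v}. 1)"
    by (simp add: col_count_def)
  also have "\<dots> = (\<Sum>d\<in>C. 1)"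
    by (rule sum.group) (use assms nth_less_of_words in auto)
  finally show ?thesis by simp
qed

text \<open>Both sides count the ordered pairs of distinct codewords agreeing in coordinate \<open>i\<close>.\<close>

lemma sum_col_count_pairs:
  assumes "C \<subseteq> words q n" "finite C" "i < n"
  shows "(\<Sum>c\<in>C. col_count C i (c ! i) - 1) = (\<Sum>v<q. col_count C i v * (col_count C i v - 1))"
proof -
  have "(\<Sum>c\<in>C. col_count C i (c ! i) - 1)
      = (\<Sum>v<q. \<Sum>c\<in>{d \<in> C. d ! i = v}. col_count C i (c ! i) - 1)"
    by (rule sum.group[symmetric]) (use assms nth_less_of_words in auto)
  also have "\<dots> = (\<Sum>v<q. \<Sum>c\<in>{d \<in> C. d ! i = v}. col_count C i v - 1)"
    by (intro sum.cong) auto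
  also have "\<dots> = (\<Sum>v<q. col_count C i v * (col_count C i v - 1))"
    by (simp add: col_count_def)
  finally show ?thesis .
qed

lemma sum_col_count_agreements:
  assumes "finite C" "c \<in> C"
  shows "(\<Sum>i<length c. col_count C i (c ! i) - 1) = (\<Sum>d\<in>C - {c}. agreements c d)"
proof -
  have "col_count C i (c ! i) - 1 = (\<Sum>d\<in>C - {c}. of_bool (c ! i = d ! i))" for i
  proof -
    have "(C - {c}) \<inter> {d. c ! i = d ! i} = {d \<in> C. d ! i = c ! i} - {c}" by auto
    then show ?thesis
      using assms by (simp add: col_count_def card_Diff_singleton)
  qed
  then have "(\<Sum>i<length c. col_count C i (c ! i) - 1)
      = (\<Sum>i<length c. \<Sum>d\<in>C - {c}. of_bool (c ! i = d ! i))"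
    by simp
  also have "\<dots> = (\<Sum>d\<in>C - {c}. \<Sum>i<length c. of_bool (c ! i = d ! i))"
    by (rule sum.swap)
  also have "\<dots> = (\<Sum>d\<in>C - {c}. agreements c d)"
    by (intro sum.cong) (auto simp: agreements_def intro!: arg_cong[where f = card])
  finally show ?thesis .
qed

text \<open>Tangent-line bounds: \<open>s (s - 1) + 6 - 4 s = (s - 2) (s - 3)\<close>.\<close>

lemma four_mult_less_pairs:
  assumes "s \<noteq> 2" "s \<noteq> 3"
  shows "4 * s < s * (s - 1) + (6::nat)"
proof (cases "s \<le> 3")
  case True
  with assms have "s \<in> {0, 1}" by auto
  then show ?thesis by auto
next
  case False
  then have "4 * (s - 1) \<le> s * (s - 1)" by simp
  with False show ?thesis by linarith
qed

lemma four_mult_le_pairs: "4 * s \<le> s * (s - 1) + (6::nat)"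
  using four_mult_less_pairs[of s] by (cases "s = 2 \<or> s = 3") auto

lemma sum_pairs_lower_bound:
  fixes f :: "'a \<Rightarrow> nat"
  assumes "finite A"
  shows "4 * sum f A \<le> (\<Sum>x\<in>A. f x * (f x - 1)) + 6 * card A"
proof -
  have "(\<Sum>x\<in>A. 4 * f x) \<le> (\<Sum>x\<in>A. f x * (f x - 1) + 6)"
    by (intro sum_mono four_mult_le_pairs)
  then show ?thesis by (simp add: sum.distrib sum_distrib_left)
qed

lemma sum_pairs_lower_bound_strict:
  fixes f :: "'a \<Rightarrow> nat"
  assumes "finite A" "x \<in> A" "f x \<noteq> 2" "f x \<noteq> 3"
  shows "4 * sum f A < (\<Sum>x\<in>A. f x * (f x - 1)) + 6 * card A"
proof -
  have "(\<Sum>x\<in>A. 4 * f x) < (\<Sum>x\<in>A. f x * (f x - 1) + 6)"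
    using assms four_mult_le_pairs four_mult_less_pairs by (intro sum_strict_mono_ex1) auto
  then show ?thesis by (simp add: sum.distrib sum_distrib_left)
qed

locale code_7_14_6 =
  fixes C :: "nat list set"
  assumes words: "C \<subseteq> words 5 7"
    and card: "card C = 14"
    and min_dist: "min_dist_ge C 6"
begin

lemma finite: "finite C"
  using card by (simp add: card_ge_0_finite)

lemma length: "c \<in> C \<Longrightarrow> length c = 7"
  using words by (auto simp: words_def)

lemma nth_less: "c \<in> C \<Longrightarrow> i < 7 \<Longrightarrow> c ! i < 5"
  using words nth_less_of_words by blast

lemma agreements_le_1: "c \<in> C \<Longrightarrow> d \<in> C \<Longrightarrow> c \<noteq> d \<Longrightarrow> agreements c d \<le> 1"
  using min_dist hamming_add_agreements[of c d] length unfolding min_dist_ge_def by fastforce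

definition column_pairs :: "nat \<Rightarrow> nat" where
  "column_pairs i = (\<Sum>v<5. col_count C i v * (col_count C i v - 1))"

definition coincidences :: "nat list \<Rightarrow> nat" where
  "coincidences c = (\<Sum>i<7. col_count C i (c ! i) - 1)"

lemma column_pairs_ge: "i < 7 \<Longrightarrow> 26 \<le> column_pairs i"
  using sum_pairs_lower_bound[of "{..<5}" "col_count C i"] sum_col_count[OF words finite]
  by (simp add: column_pairs_def card)

lemma coincidences_le: "c \<in> C \<Longrightarrow> coincidences c \<le> 13"
proof -
  assume c: "c \<in> C"
  have "coincidences c = (\<Sum>d\<in>C - {c}. agreements c d)"
    using sum_col_count_agreements[OF finite c] length[OF c] by (simp add: coincidences_def)
  also have "\<dots> \<le> (\<Sum>d\<in>C - {c}. 1)"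
    using c agreements_le_1 by (intro sum_mono) auto
  also have "\<dots> = 13"
    using c finite card by (simp add: card_Diff_singleton)
  finally show ?thesis .
qed

lemma sum_coincidences: "(\<Sum>c\<in>C. coincidences c) = (\<Sum>i<7. column_pairs i)"
proof -
  have "(\<Sum>c\<in>C. coincidences c) = (\<Sum>i<7. \<Sum>c\<in>C. col_count C i (c ! i) - 1)"
    unfolding coincidences_def by (rule sum.swap)
  also have "\<dots> = (\<Sum>i<7. column_pairs i)"
    unfolding column_pairs_def by (intro sum.cong refl sum_col_count_pairs[OF words finite]) auto
  finally show ?thesis .
qed

lemma sum_column_pairs: "(\<Sum>i<7. column_pairs i) = 182"
proof -
  have "(\<Sum>i<7. column_pairs i) \<le> (\<Sum>c\<in>C. 13)"
    unfolding sum_coincidences[symmetric] using coincidences_le by (intro sum_mono)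
  moreover have "(\<Sum>i<7::nat. 26) \<le> (\<Sum>i<7. column_pairs i)"
    using column_pairs_ge by (intro sum_mono) auto
  ultimately show ?thesis by (simp add: card)
qed

lemma column_pairs_eq: "i < 7 \<Longrightarrow> column_pairs i = 26"
  using sum_column_pairs column_pairs_ge
  by (intro sum_mono_inv[of "\<lambda>_. 26" "{..<7}", symmetric]) auto

lemma coincidences_eq: "c \<in> C \<Longrightarrow> coincidences c = 13"
  using sum_column_pairs coincidences_le finite card
  by (intro sum_mono_inv[of _ C "\<lambda>_. 13"]) (auto simp: sum_coincidences)

lemma col_count_2_or_3:
  assumes "i < 7" "v < 5"
  shows "col_count C i v = 2 \<or> col_count C i v = 3"
  using sum_pairs_lower_bound_strict[of "{..<5}" v "col_count C i"] assms
    column_pairs_eq[of i] sum_col_count[OF words finite, of i]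
  by (auto simp: column_pairs_def card)

lemma ex_col_count_2: "i < 7 \<Longrightarrow> \<exists>v<5. col_count C i v = 2"
proof (rule ccontr)
  assume i: "i < 7" and "\<not> (\<exists>v<5. col_count C i v = 2)"
  then have "(\<Sum>v<5. col_count C i v) = (\<Sum>v<5::nat. 3)"
    using col_count_2_or_3 by (intro sum.cong) auto
  with sum_col_count[OF words finite i] card show False by simp
qed

definition minority_word :: "nat list" where
  "minority_word = map (\<lambda>i. SOME v. v < 5 \<and> col_count C i v = 2) [0..<7]"

lemma minority_word_nth:
  "i < 7 \<Longrightarrow> minority_word ! i < 5 \<and> col_count C i (minority_word ! i) = 2"
  unfolding minority_word_def using someI_ex[OF ex_col_count_2] by simp

lemma length_minority_word: "length minority_word = 7"
  by (simp add: minority_word_def)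

lemma minority_word_in_words: "minority_word \<in> words 5 7"
  using minority_word_nth length_minority_word
  by (auto simp: words_def in_set_conv_nth)

lemma agreements_minority_word:
  assumes c: "c \<in> C"
  shows "agreements c minority_word \<le> 1"
proof -
  define A where "A = {k. k < 7 \<and> c ! k = minority_word ! k}"
  have A: "A \<subseteq> {..<7}" by (auto simp: A_def)
  have "col_count C k (c ! k) - 1 \<le> (if k \<in> A then 1 else 2)" if "k < 7" for k
    using col_count_2_or_3[OF that nth_less[OF c that]] minority_word_nth[OF that]
    by (auto simp: A_def)
  then have "coincidences c \<le> (\<Sum>k<7. if k \<in> A then 1 else 2)"
    unfolding coincidences_def by (intro sum_mono) auto
  also have "\<dots> = card A + 2 * (7 - card A)"
    using A by (simp add: sum.If_cases Int_absorb1 Diff_eq[symmetric] card_Diff_subset finite_subset)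
  finally have "card A \<le> 1"
    using coincidences_eq[OF c] card_mono[OF _ A] by simp
  then show ?thesis
    using length[OF c] by (simp add: agreements_def A_def)
qed

end

theorem proposition5p7:
  assumes "C \<subseteq> words 5 7" and "card C = 14" and "min_dist_ge C 6"
  shows "\<exists>u\<in>words 5 7. card (insert u C) = 15 \<and> min_dist_ge (insert u C) 6"
proof -
  interpret code_7_14_6 C
    using assms by unfold_locales
  let ?u = minority_word
  have far: "6 \<le> hamming ?u c \<and> 6 \<le> hamming c ?u" if "c \<in> C" for c
    using agreements_minority_word[OF that] agreements_commute[of c ?u]
      hamming_add_agreements[of c ?u] hamming_add_agreements[of ?u c]
      length[OF that] length_minority_word
    by simp
  have "?u \<notin> C"
    using far agreements_self[of ?u] hamming_add_agreements[of ?u ?u] length_minority_word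
    by fastforce
  then have "card (insert ?u C) = 15"
    using finite card by simp
  moreover have "min_dist_ge (insert ?u C) 6"
    using min_dist far unfolding min_dist_ge_def by auto
  ultimately show ?thesis
    using minority_word_in_words by blast
qed

end
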